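(* Let $v$ be the vertex of $\mathcal H^\dagger$ with coordinates $(m,n)\in\mathbb Z^2$, and let $T'$ be the image of $\mathcal H^\dagger$ under the map $\psi'$ constructed exactly as $\psi_{\lambda\Delta}$ (same flow $\phi^\dagger$), except that the additive constant is fixed by $\psi'(v)=0$ instead of $\psi=0$ at the dual vertex just to the left of $\mathcal H_1$. Then $T'=T_{\lambda'\Delta}$ with $$\lambda'=\lambda\Big(\tfrac{\beta}{\gamma}\Big)^{m}\Big(\tfrac{\beta}{\alpha}\Big)^{n}.$$ In particular, if $\lambda$ is chosen uniformly at random on the unit circle, the law of the random T-graph $T_{\lambda\Delta}$ is invariant under the lattice translations of $\mathcal H$ (i.e. under re-centring the construction at any dual vertex).
   Context: Setup. Let $\mathcal H$ be the hexagonal lattice embedded in the plane with one third of its edges vertical, with its vertices properly 2-coloured black/white. Let $e_1,e_2$ be two vectors generating its translation group and $\mathcal H_1$ a fundamental domain consisting of one vertical edge with its white top endpoint and black bottom endpoint. Each vertex $v$ has coordinates $(m(v),n(v))\in\mathbb Z^2$, the unique pair with $v-m e_1-n e_2\in\mathcal H_1$; thus $w(m,n)$ (white) and $b(m,n)$ (black) are the two endpoints of a vertical edge. $\mathcal H^\dagger$ denotes the dual triangular lattice; a face of $\mathcal H^\dagger$ is black or white according to the vertex of $\mathcal H$ it contains; a vertex $v$ of $\mathcal H^\dagger$ (a hexagonal face of $\mathcal H$) has coordinates $(m(v),n(v))$ equal to the common coordinates of the two vertices of that hexagon located just to the right of $v$. Fix $p_a,p_b,p_c\in(0,1)$ with $p_a+p_b+p_c=1$,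 a triangle $\Delta$ in $\mathbb C$ with vertices $A,B,C$ and angles $\pi p_a,\pi p_b,\pi p_c$, and set $\alpha=C-B$, $\beta=A-C$, $\gamma=B-A$ (so $\alpha+\beta+\gamma=0$). For $\lambda\in\mathbb C$ with $|\lambda|=1$ define, for adjacent white $w$ and black $b$, $$\phi(wb)=\Re\Big(\lambda^{-1}(\tfrac{\beta}{\gamma})^{-m(w)}(\tfrac{\beta}{\alpha})^{-n(w)}\Big)\,\alpha\,\lambda\,(\tfrac{\beta}{\gamma})^{m(b)}(\tfrac{\beta}{\alpha})^{n(b)},\qquad \phi(bw)=-\phi(wb).$$ The dual flow $\phi^\dagger$ assigns to the oriented edge of $\mathcal H^\dagger$ crossing $wb$ with $w$ on its left the value $\phi(wb)$; it has zero circulation around every triangle, so there is a function $\psi=\psi_{\lambda\Delta}$ on vertices of $\mathcal H^\dagger$ with $\psi(v')-\psi(v)=\phi^\dagger(vv')$, normalised by $\psi=0$ at the dual vertex just to the left of $\mathcal H_1$. Extending $\psi$ affinely on edges, $T_{\lambda\Delta}=\psi(\mathcal H^\dagger)\subset\mathbb C$ is called the T-graph with parameters $\Delta,\lambda$. *)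

theory Defs
  imports "HOL-Analysis.Analysis" "HOL-Probability.Probability"
begin

text \<open>Coordinates: white vertex w(m,n) and black vertex b(m,n) are the endpoints of the
vertical edge (m,n).  White w(m,n) is adjacent to b(m,n), b(m,n+1), b(m-1,n+1)
(this adjacency is forced by the requirement that the flow phi be divergence free,
using alpha+beta+gamma = 0).  Dual vertices (faces of H) are indexed by int pairs;
face (m,n) is the hexagon just to the left of the vertical edge (m,n).\<close>

definition tri_alpha :: "complex \<Rightarrow> complex \<Rightarrow> complex \<Rightarrow> complex" where
  "tri_alpha A B C = C - B"
definition tri_beta :: "complex \<Rightarrow> complex \<Rightarrow> complex \<Rightarrow> complex" where
  "tri_beta A B C = A - C"
definition tri_gamma :: "complex \<Rightarrow> complex \<Rightarrow> complex \<Rightarrow> complex" where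
  "tri_gamma A B C = B - A"

definition tri_angle :: "complex \<Rightarrow> complex \<Rightarrow> complex \<Rightarrow> real" where
  "tri_angle A B C = \<bar>Arg ((B - A) / (C - A))\<bar>"

text \<open>The flow phi(wb) for white w with coordinates (mw,nw) and black b with (mb,nb).\<close>
definition tflow :: "complex \<Rightarrow> complex \<Rightarrow> complex \<Rightarrow> complex \<Rightarrow> int \<times> int \<Rightarrow> int \<times> int \<Rightarrow> complex" where
  "tflow A B C lam w b =
     (let al = tri_alpha A B C; be = tri_beta A B C; ga = tri_gamma A B C;
          x = be / ga; y = be / al
      in complex_of_real (Re (inverse lam * x powi (- fst w) * y powi (- snd w)))
         * al * lam * x powi (fst b) * y powi (snd b))"

text \<open>psi is a height function of the dual flow normalised to vanish at dual vertex p.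
For each white vertex w(m,n) the three dual edges crossing its three edges (oriented with
w on the left) form the triangle (m,n) -> (m+1,n) -> (m,n+1) -> (m,n).  Every edge of H
has exactly one white endpoint, so these constraints cover every dual edge.\<close>
definition is_height :: "complex \<Rightarrow> complex \<Rightarrow> complex \<Rightarrow> complex \<Rightarrow> int \<times> int \<Rightarrow> (int \<times> int \<Rightarrow> complex) \<Rightarrow> bool" where
  "is_height A B C lam p psi \<longleftrightarrow> psi p = 0 \<and>
     (\<forall>m n. psi (m+1, n) - psi (m, n) = tflow A B C lam (m, n) (m, n)
          \<and> psi (m, n+1) - psi (m+1, n) = tflow A B C lam (m, n) (m, n+1)
          \<and> psi (m, n) - psi (m, n+1) = tflow A B C lam (m, n) (m-1, n+1))"

definition tpsi :: "complex \<Rightarrow> complex \<Rightarrow> complex \<Rightarrow> complex \<Rightarrow> int \<times> int \<Rightarrow> int \<times> int \<Rightarrow> complex" where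
  "tpsi A B C lam p = (THE psi. is_height A B C lam p psi)"

definition dual_edges :: "((int \<times> int) \<times> (int \<times> int)) set" where
  "dual_edges = (\<Union>m n. {((m,n),(m+1,n)), ((m+1,n),(m,n+1)), ((m,n+1),(m,n))})"

definition tgraph_img :: "(int \<times> int \<Rightarrow> complex) \<Rightarrow> complex set" where
  "tgraph_img psi = (\<Union>e\<in>dual_edges. closed_segment (psi (fst e)) (psi (snd e)))"

text \<open>The T-graph T_{lambda Delta}: normalised at the dual vertex (0,0) just left of H_1.\<close>
definition Tgraph :: "complex \<Rightarrow> complex \<Rightarrow> complex \<Rightarrow> complex \<Rightarrow> complex set" where
  "Tgraph A B C lam = tgraph_img (tpsi A B C lam (0,0))"

definition unif_circle :: "complex measure" where
  "unif_circle = distr (uniform_measure lborel {0..<2*pi}) borel cis"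

end

theory Submission
  imports Defs
begin

text \<open>Put \<open>x = \<beta>/\<gamma>\<close>, \<open>y = \<beta>/\<alpha>\<close> and \<open>\<lambda>' = \<lambda> x^m y^n\<close>.  The flow \<open>\<phi>(wb)\<close> depends on
\<open>\<lambda>\<close> and on the coordinates only through \<open>\<lambda>\<inverse> x^-m(w) y^-n(w)\<close> and \<open>\<lambda> x^m(b) y^n(b)\<close>,
so the flow for \<open>\<lambda>'\<close> is the flow for \<open>\<lambda>\<close> pulled back along the lattice translation by
\<open>(m, n)\<close>.  Hence the height function normalised at \<open>(m, n)\<close> is a translate of the one
for \<open>\<lambda>'\<close> normalised at the origin, and both have the same image, as translations permute
the edges of the dual lattice.  The flow does not change when \<open>\<lambda>\<close> is multiplied by a
positive real, so \<open>\<lambda>'\<close> may be replaced by the rotation \<open>\<lambda> sgn(x^m y^n)\<close> of \<open>\<lambda>\<close>, and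
rotations preserve the uniform law on the circle.\<close>

definition translate :: "int \<Rightarrow> int \<Rightarrow> (int \<times> int \<Rightarrow> 'a) \<Rightarrow> int \<times> int \<Rightarrow> 'a" where
  "translate m n f = (\<lambda>(a, b). f (a + m, b + n))"

lemma translate_translate: "translate m n (translate m' n' f) = translate (m + m') (n + n') f"
  by (simp add: translate_def fun_eq_iff add.assoc)

lemma translate_zero [simp]: "translate 0 0 f = f"
  by (simp add: translate_def)

lemma all_int_pair_shift:
  fixes m n :: int
  shows "(\<forall>a b. P (a + m) (b + n)) \<longleftrightarrow> (\<forall>a b. P a b)"
proof
  assume "\<forall>a b. P (a + m) (b + n)"
  then have "P (a - m + m) (b - n + n)" for a b by blast
  then show "\<forall>a b. P a b" by simp
qed simp

lemma tflow_translate: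
  assumes "tri_alpha A B C \<noteq> 0" "tri_beta A B C \<noteq> 0" "tri_gamma A B C \<noteq> 0"
  shows "tflow A B C (lam * (tri_beta A B C / tri_gamma A B C) powi m
                         * (tri_beta A B C / tri_alpha A B C) powi n) (a, b) (a', b')
       = tflow A B C lam (a + m, b + n) (a' + m, b' + n)"
proof -
  define x where "x = tri_beta A B C / tri_gamma A B C"
  define y where "y = tri_beta A B C / tri_alpha A B C"
  have "x \<noteq> 0" "y \<noteq> 0" using assms by (auto simp: x_def y_def)
  then have "inverse (lam * x powi m * y powi n) * x powi (- a) * y powi (- b)
               = inverse lam * x powi (- (a + m)) * y powi (- (b + n))"
        and "r * al * (lam * x powi m * y powi n) * x powi a' * y powi b'
               = r * al * lam * x powi (a' + m) * y powi (b' + n)" for r al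
    by (simp_all add: power_int_add power_int_diff power_int_minus divide_inverse mult_ac)
  then show ?thesis
    unfolding tflow_def Let_def x_def[symmetric] y_def[symmetric] fst_conv snd_conv
    by (simp only:)
qed

lemma is_height_translate:
  assumes "tri_alpha A B C \<noteq> 0" "tri_beta A B C \<noteq> 0" "tri_gamma A B C \<noteq> 0"
  shows "is_height A B C (lam * (tri_beta A B C / tri_gamma A B C) powi m
                             * (tri_beta A B C / tri_alpha A B C) powi n) (0, 0) (translate m n psi)
     \<longleftrightarrow> is_height A B C lam (m, n) psi"
proof -
  let ?E = "\<lambda>a b. psi (a + 1, b) - psi (a, b) = tflow A B C lam (a, b) (a, b)
          \<and> psi (a, b + 1) - psi (a + 1, b) = tflow A B C lam (a, b) (a, b + 1)
          \<and> psi (a, b) - psi (a, b + 1) = tflow A B C lam (a, b) (a - 1, b + 1)"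
  show ?thesis
    unfolding is_height_def translate_def all_int_pair_shift[of ?E m n, symmetric]
    by (simp only: tflow_translate[OF assms] prod.case) (simp add: algebra_simps)
qed

lemma int_fun_eqI:
  fixes f :: "int \<Rightarrow> 'a"
  assumes step: "\<And>k. f (k + 1) = f k"
  shows "f k = f l"
proof -
  have "f k = f 0" for k
  proof (induction k rule: int_induct[where k = 0])
    case (step2 i)
    then show ?case using step[of "i - 1"] by simp
  qed (simp_all add: step)
  from this[of k] this[of l] show ?thesis by simp
qed

lemma int_pair_fun_eqI:
  fixes f :: "int \<times> int \<Rightarrow> 'a"
  assumes "\<And>a b. f (a + 1, b) = f (a, b)" "\<And>a b. f (a, b + 1) = f (a, b)"
  shows "f (a, b) = f (c, d)"
proof -
  have "f (a, b) = f (c, b)" by (rule int_fun_eqI[where f = "\<lambda>a. f (a, b)"]) (rule assms(1))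
  also have "\<dots> = f (c, d)" by (rule int_fun_eqI[where f = "\<lambda>b. f (c, b)"]) (rule assms(2))
  finally show ?thesis .
qed

lemma is_height_unique:
  assumes "is_height A B C lam p psi" "is_height A B C lam p psi'"
  shows "psi = psi'"
proof -
  have swap: "x - x' = y - y' \<Longrightarrow> x - y = x' - y'" for x x' y y' :: complex
    by (simp add: algebra_simps)
  have steps1: "psi (a + 1, b) - psi (a, b) = psi' (a + 1, b) - psi' (a, b)"
    and "psi (a, b) - psi (a, b + 1) = psi' (a, b) - psi' (a, b + 1)" for a b
    using assms by (simp_all add: is_height_def)
  then have steps2: "psi (a, b + 1) - psi (a, b) = psi' (a, b + 1) - psi' (a, b)" for a b
    by (metis minus_diff_eq)
  obtain c d where p: "p = (c, d)" by (cases p)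
  have "psi (a, b) - psi' (a, b) = psi (c, d) - psi' (c, d)" for a b
    by (rule int_pair_fun_eqI[where f = "\<lambda>q. psi q - psi' q"]) (rule swap, rule steps1 steps2)+
  then show ?thesis using assms p by (auto simp: is_height_def fun_eq_iff)
qed

lemma tpsi_eqI: "is_height A B C lam p psi \<Longrightarrow> tpsi A B C lam p = psi"
  unfolding tpsi_def by (blast intro: is_height_unique)

lemma dual_edge_translate:
  assumes "((a, b), (c, d)) \<in> dual_edges"
  shows "((a + m, b + n), (c + m, d + n)) \<in> dual_edges"
proof -
  obtain k l where
    "((a, b), (c, d)) \<in> {((k, l), (k + 1, l)), ((k + 1, l), (k, l + 1)), ((k, l + 1), (k, l))}"
    using assms unfolding dual_edges_def by blast
  then have "((a + m, b + n), (c + m, d + n))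
      \<in> {((k', l'), (k' + 1, l')), ((k' + 1, l'), (k', l' + 1)), ((k', l' + 1), (k', l'))}"
    if "k' = k + m" "l' = l + n" for k' l'
    using that by auto
  then show ?thesis unfolding dual_edges_def by blast
qed

lemma tgraph_img_translate_subset: "tgraph_img (translate m n psi) \<subseteq> tgraph_img psi"
proof
  fix z assume "z \<in> tgraph_img (translate m n psi)"
  then obtain a b c d where e: "((a, b), (c, d)) \<in> dual_edges"
    and z: "z \<in> closed_segment (psi (a + m, b + n)) (psi (c + m, d + n))"
    unfolding tgraph_img_def translate_def by (auto simp: case_prod_beta)
  show "z \<in> tgraph_img psi"
    unfolding tgraph_img_def using dual_edge_translate[OF e] z by force
qed

lemma tgraph_img_translate: "tgraph_img (translate m n psi) = tgraph_img psi"
proof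
  have "tgraph_img psi = tgraph_img (translate (- m) (- n) (translate m n psi))"
    by (simp add: translate_translate)
  also have "\<dots> \<subseteq> tgraph_img (translate m n psi)"
    by (rule tgraph_img_translate_subset)
  finally show "tgraph_img psi \<subseteq> tgraph_img (translate m n psi)" .
qed (rule tgraph_img_translate_subset)
lemma tgraph_img_tpsi_recentre:
  assumes "tri_alpha A B C \<noteq> 0" "tri_beta A B C \<noteq> 0" "tri_gamma A B C \<noteq> 0"
  shows "tgraph_img (tpsi A B C lam (m, n))
       = Tgraph A B C (lam * (tri_beta A B C / tri_gamma A B C) powi m
                          * (tri_beta A B C / tri_alpha A B C) powi n)"
    (is "_ = Tgraph A B C ?lam'")
proof (cases "\<exists>psi. is_height A B C lam (m, n) psi")
  case True
  then obtain psi where psi: "is_height A B C lam (m, n) psi" ..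
  then have "tpsi A B C ?lam' (0, 0) = translate m n psi"
    by (intro tpsi_eqI) (simp add: is_height_translate[OF assms])
  then show ?thesis
    by (simp add: Tgraph_def tpsi_eqI[OF psi] tgraph_img_translate)
next
  case False
  have "\<not> is_height A B C ?lam' (0, 0) phi" for phi
    using False is_height_translate[OF assms, of lam m n "translate (- m) (- n) phi"]
    by (auto simp: translate_translate)
  \<comment> \<open>Without height functions both sides are the same junk value of THE.\<close>
  with False have "is_height A B C ?lam' (0, 0) = is_height A B C lam (m, n)"
    by blast
  then show ?thesis
    by (simp add: Tgraph_def tpsi_def)
qed

lemma emeasure_lborel_vimage_plus:
  fixes S :: "real set"
  assumes "S \<in> sets borel"
  shows "emeasure lborel ((\<lambda>t. c + t) -` S) = emeasure lborel S"
proof -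
  have "emeasure (distr lborel borel ((+) c)) S = emeasure lborel ((+) c -` S \<inter> space lborel)"
    using assms by (intro emeasure_distr) auto
  then show ?thesis by (simp add: lborel_distr_plus)
qed

lemma emeasure_lborel_periodic_shift:
  fixes E :: "real set"
  assumes E: "E \<in> sets borel" and periodic: "\<And>t. t + P \<in> E \<longleftrightarrow> t \<in> E"
    and s: "0 \<le> s" "s < P"
  shows "emeasure lborel ({0..<P} \<inter> (\<lambda>t. s + t) -` E) = emeasure lborel ({0..<P} \<inter> E)"
proof -
  have "{0..<P} \<inter> (\<lambda>t. s + t) -` E = (\<lambda>t. s + t) -` ({s..<s + P} \<inter> E)" by auto
  then have "emeasure lborel ({0..<P} \<inter> (\<lambda>t. s + t) -` E) = emeasure lborel ({s..<s + P} \<inter> E)"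
    using E by (simp only:) (rule emeasure_lborel_vimage_plus, simp)
  also have "{s..<s + P} \<inter> E = ({s..<P} \<inter> E) \<union> (\<lambda>t. - P + t) -` ({0..<s} \<inter> E)"
    using s periodic[of "t - P" for t] by (auto simp: algebra_simps)
  also have "emeasure lborel \<dots>
      = emeasure lborel ({s..<P} \<inter> E) + emeasure lborel ((\<lambda>t. - P + t) -` ({0..<s} \<inter> E))"
    using E by (intro plus_emeasure[symmetric]) auto
  also have "\<dots> = emeasure lborel ({s..<P} \<inter> E) + emeasure lborel ({0..<s} \<inter> E)"
    using E by (simp only: emeasure_lborel_vimage_plus sets.Int sets_lborel atLeastLessThan_borel)
  also have "\<dots> = emeasure lborel (({s..<P} \<inter> E) \<union> ({0..<s} \<inter> E))"
    using E by (intro plus_emeasure) auto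
  also have "({s..<P} \<inter> E) \<union> ({0..<s} \<inter> E) = {0..<P} \<inter> E" using s by auto
  finally show ?thesis .
qed

lemma sets_unif_circle [simp]: "sets unif_circle = sets borel"
  by (simp add: unif_circle_def)

lemma space_unif_circle [simp]: "space unif_circle = UNIV"
  by (simp add: unif_circle_def)

lemma measurable_mult_right_unif_circle: "(\<lambda>l. l * z) \<in> unif_circle \<rightarrow>\<^sub>M unif_circle"
  by (simp add: measurable_cong_sets[OF sets_unif_circle sets_unif_circle])

lemma unif_circle_rotation_invariant:
  assumes "cmod z = 1"
  shows "distr unif_circle unif_circle (\<lambda>l. l * z) = unif_circle"
proof (rule measure_eqI)
  obtain s where s: "0 \<le> s" "s < 2 * pi" and z: "z = cis s"
  proof
    let ?s = "if 0 \<le> Arg z then Arg z else Arg z + 2 * pi"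
    show "0 \<le> ?s" "?s < 2 * pi" using Arg_bounded[of z] by auto
    have "z \<noteq> 0" using assms by auto
    then show "z = cis ?s" using assms cis_Arg[of z] by (auto simp: cis_mult[symmetric] sgn_div_norm)
  qed
  define U where "U = uniform_measure lborel {0..<2 * pi}"
  have unif: "unif_circle = distr U borel cis" by (simp add: unif_circle_def U_def)
  have cis_U: "cis \<in> U \<rightarrow>\<^sub>M borel"
    by (simp add: U_def measurable_cong_sets[OF sets_uniform_measure refl]
                  borel_measurable_continuous_onI continuous_on_cis)
  fix A assume "A \<in> sets (distr unif_circle unif_circle (\<lambda>l. l * z))"
  then have A: "A \<in> sets borel" by simp
  define E where "E = cis -` A"
  have E: "E \<in> sets borel"
    unfolding E_def using measurable_sets[OF _ A, of cis borel]
    by (simp add: borel_measurable_continuous_onI continuous_on_cis)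
  have rot_A: "(\<lambda>l. l * z) -` A \<in> sets borel"
    using measurable_sets_borel[OF _ A, of "\<lambda>l. l * z"] by simp
  have periodic: "t + 2 * pi \<in> E \<longleftrightarrow> t \<in> E" for t
    by (simp add: E_def cis_mult[symmetric])
  have "emeasure (distr unif_circle unif_circle (\<lambda>l. l * z)) A
      = emeasure unif_circle ((\<lambda>l. l * z) -` A)"
    using A by (simp add: emeasure_distr measurable_mult_right_unif_circle)
  also have "\<dots> = emeasure U (cis -` ((\<lambda>l. l * z) -` A))"
    using emeasure_distr[OF cis_U rot_A] by (simp add: unif U_def)
  also have "cis -` ((\<lambda>l. l * z) -` A) = (\<lambda>t. s + t) -` E"
    by (auto simp: E_def z cis_mult add.commute)
  also have "emeasure U \<dots>
      = emeasure lborel ({0..<2 * pi} \<inter> (\<lambda>t. s + t) -` E) / emeasure lborel {0..<2 * pi}"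
    using measurable_sets_borel[OF _ E, of "\<lambda>t. s + t"]
    by (simp add: U_def emeasure_uniform_measure Int_commute)
  also have "\<dots> = emeasure lborel ({0..<2 * pi} \<inter> E) / emeasure lborel {0..<2 * pi}"
    using E periodic s by (simp only: emeasure_lborel_periodic_shift)
  also have "\<dots> = emeasure U E"
    using E by (simp add: U_def emeasure_uniform_measure Int_commute)
  also have "\<dots> = emeasure unif_circle A"
    using emeasure_distr[OF cis_U A] by (simp add: unif U_def E_def)
  finally show "emeasure (distr unif_circle unif_circle (\<lambda>l. l * z)) A = emeasure unif_circle A" .
qed simp

lemma distr_unif_circle_rotate:
  assumes f: "f \<in> unif_circle \<rightarrow>\<^sub>M N" and "cmod z = 1"
  shows "(\<lambda>l. f (l * z)) \<in> unif_circle \<rightarrow>\<^sub>M N"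
    and "distr unif_circle N (\<lambda>l. f (l * z)) = distr unif_circle N f"
proof -
  have comp: "(\<lambda>l. f (l * z)) = f \<circ> (\<lambda>l. l * z)" by (simp add: comp_def)
  show "(\<lambda>l. f (l * z)) \<in> unif_circle \<rightarrow>\<^sub>M N"
    unfolding comp by (rule measurable_comp[OF measurable_mult_right_unif_circle f])
  show "distr unif_circle N (\<lambda>l. f (l * z)) = distr unif_circle N f"
    unfolding comp
    by (simp add: distr_distr[OF f measurable_mult_right_unif_circle, symmetric]
                  unif_circle_rotation_invariant[OF assms(2)])
qed

lemma tflow_mult_of_real_pos:
  assumes "r > 0"
  shows "tflow A B C (lam * complex_of_real r) w b = tflow A B C lam w b"
proof -
  have "complex_of_real (Re (inverse (lam * complex_of_real r) * u * u')) * v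
          * (lam * complex_of_real r)
      = complex_of_real (Re (inverse lam * u * u')) * v * lam" for u u' v
  proof -
    have "inverse (lam * complex_of_real r) * u * u' = (inverse lam * u * u') / complex_of_real r"
      by (simp add: inverse_mult_distrib divide_complex_def mult_ac)
    then have "complex_of_real (Re (inverse (lam * complex_of_real r) * u * u'))
             = complex_of_real (Re (inverse lam * u * u')) / complex_of_real r"
      by (simp add: Re_divide_of_real of_real_divide)
    then show ?thesis
      using assms by (simp add: field_simps)
  qed
  then show ?thesis
    unfolding tflow_def Let_def by (simp only:)
qed

lemma Tgraph_mult_of_real_pos:
  "r > 0 \<Longrightarrow> Tgraph A B C (lam * complex_of_real r) = Tgraph A B C lam"
  by (simp add: Tgraph_def tpsi_def is_height_def tflow_mult_of_real_pos)

lemma Tgraph_mult_sgn: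
  assumes "c \<noteq> 0"
  shows "Tgraph A B C (lam * c) = Tgraph A B C (lam * sgn c)"
proof -
  have "lam * c = lam * sgn c * complex_of_real (cmod c)"
    using assms by (simp add: sgn_eq)
  moreover have "Tgraph A B C (lam * sgn c * complex_of_real (cmod c)) = Tgraph A B C (lam * sgn c)"
    using assms by (intro Tgraph_mult_of_real_pos) simp
  ultimately show ?thesis by (simp only:)
qed

lemma tri_sides_nonzero:
  assumes "tri_angle A B C \<noteq> 0" "tri_angle B C A \<noteq> 0"
  shows "tri_alpha A B C \<noteq> 0" "tri_beta A B C \<noteq> 0" "tri_gamma A B C \<noteq> 0"
  using assms by (auto simp: tri_angle_def tri_alpha_def tri_beta_def tri_gamma_def Arg_zero)

theorem mainTheorem1:
  fixes pa pb pc :: real and A B C lam :: complex and m n :: int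
  assumes "0 < pa" "pa < 1" "0 < pb" "pb < 1" "0 < pc" "pc < 1" "pa + pb + pc = 1"
    and "tri_angle A B C = pi * pa" "tri_angle B C A = pi * pb" "tri_angle C A B = pi * pc"
    and "cmod lam = 1"
  shows "tgraph_img (tpsi A B C lam (m, n))
           = Tgraph A B C (lam * (tri_beta A B C / tri_gamma A B C) powi m
                               * (tri_beta A B C / tri_alpha A B C) powi n)
     \<and> (\<forall>N :: complex set measure.
          (\<lambda>l. Tgraph A B C l) \<in> unif_circle \<rightarrow>\<^sub>M N \<longrightarrow>
            ((\<lambda>l. tgraph_img (tpsi A B C l (m, n))) \<in> unif_circle \<rightarrow>\<^sub>M N
             \<and> distr unif_circle N (\<lambda>l. tgraph_img (tpsi A B C l (m, n)))
               = distr unif_circle N (\<lambda>l. Tgraph A B C l)))"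
proof -
  have nz: "tri_alpha A B C \<noteq> 0" "tri_beta A B C \<noteq> 0" "tri_gamma A B C \<noteq> 0"
    using tri_sides_nonzero assms(1,3,8,9) by auto
  define c where
    "c = (tri_beta A B C / tri_gamma A B C) powi m * (tri_beta A B C / tri_alpha A B C) powi n"
  have "c \<noteq> 0" using nz by (simp add: c_def)
  then have recentre: "tgraph_img (tpsi A B C l (m, n)) = Tgraph A B C (l * sgn c)" for l
    using tgraph_img_tpsi_recentre[OF nz, of l m n]
    by (simp add: c_def mult.assoc Tgraph_mult_sgn)
  have unit: "cmod (sgn c) = 1" using \<open>c \<noteq> 0\<close> by (simp add: norm_sgn)
  show ?thesis
  proof (intro conjI allI impI)
    show "tgraph_img (tpsi A B C lam (m, n))
        = Tgraph A B C (lam * (tri_beta A B C / tri_gamma A B C) powi m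
                           * (tri_beta A B C / tri_alpha A B C) powi n)"
      by (rule tgraph_img_tpsi_recentre[OF nz])
    fix N :: "complex set measure"
    assume T: "(\<lambda>l. Tgraph A B C l) \<in> unif_circle \<rightarrow>\<^sub>M N"
    show "(\<lambda>l. tgraph_img (tpsi A B C l (m, n))) \<in> unif_circle \<rightarrow>\<^sub>M N"
      unfolding recentre by (rule distr_unif_circle_rotate(1)[OF T unit])
    show "distr unif_circle N (\<lambda>l. tgraph_img (tpsi A B C l (m, n)))
        = distr unif_circle N (\<lambda>l. Tgraph A B C l)"
      unfolding recentre by (rule distr_unif_circle_rotate(2)[OF T unit])
  qed
qed

end
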